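(* Let $\sigma_0,s_1,s_2$ be linearly independent real bivariate polynomials of exact degree $k$, none having multiple factors. Suppose that every nonzero linear combination $s$ of $s_1,s_2$ differs from $\sigma_0$ by a factor from $\Pi_2$, i.e. there are relatively prime $\beta,\bar\beta\in\Pi_2$ with $s\beta=\sigma_0\bar\beta$. Then $$\sigma_0=\tilde\sigma_0\beta_0,\quad s_1=\tilde\sigma_0\beta_1,\quad s_2=\tilde\sigma_0\beta_2,\qquad \tilde\sigma_0\in\Pi_{k-1},\ \beta_i\in\Pi_2.$$ Moreover, if $\beta_0$ and $\beta_1$ are relatively prime, then $\tilde\sigma_0$ is uniquely determined by the first two of these relations. Furthermore, if $\beta_0$ has a nonconstant common factor with $\beta_1$ and a nonconstant common factor with $\beta_2$, then either (i) $\beta_i=\ell\ell_i$, $i=0,1,2$, for a common linear polynomial $\ell$ and linear polynomials $\ell_i$, or (ii) $\beta_0$ and $\beta_1+\epsilon\beta_2$ are relatively prime for every $\epsilon>0$.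
   Context: $\Pi_m$ denotes the space of real bivariate polynomials of total degree at most $m$. A polynomial has a multiple factor if it is divisible by $r^2$ for some polynomial $r$ of degree $\ge1$. *)

theory Defs
  imports "HOL-Computational_Algebra.Polynomial_Factorial"
begin

(* Real bivariate polynomials R[x,y] are represented as real poly poly:
   polynomials in y whose coefficients are polynomials in x. *)
type_synonym bipoly = "real poly poly"

definition bconst :: "real \<Rightarrow> bipoly" where
  "bconst c = [:[:c:]:]"

(* total degree; the zero polynomial gets total degree 0 *)
definition tdeg :: "bipoly \<Rightarrow> nat" where
  "tdeg p = Max ({0} \<union> {degree (coeff p i) + i | i. coeff p i \<noteq> 0})"

definition Pi :: "nat \<Rightarrow> bipoly set" where
  "Pi m = {p. tdeg p \<le> m}"

definition has_multiple_factor :: "bipoly \<Rightarrow> bool" where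
  "has_multiple_factor p \<longleftrightarrow> (\<exists>r. tdeg r \<ge> 1 \<and> r ^ 2 dvd p)"

definition lin_indep3 :: "bipoly \<Rightarrow> bipoly \<Rightarrow> bipoly \<Rightarrow> bool" where
  "lin_indep3 p q r \<longleftrightarrow>
     (\<forall>a b c. bconst a * p + bconst b * q + bconst c * r = 0 \<longrightarrow> a = 0 \<and> b = 0 \<and> c = 0)"

end

theory Submission
  imports Defs "HOL-Computational_Algebra.Field_as_Ring"
begin

text \<open>Let \<open>G = gcd(\<sigma>0, s1, s2)\<close> and \<open>\<sigma>0 = G \<beta>0\<close>. Applied to \<open>s1 + t s2\<close>, the hypothesis says that
  \<open>\<sigma>0\<close> shares with every member of the pencil a factor of codegree at most 2. Divided by \<open>G\<close>,
  the factors shared with different members are pairwise coprime divisors of \<open>\<beta>0\<close>; four of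
  them, each of degree at least \<open>deg \<beta>0 - 2\<close>, force \<open>deg \<beta>0 \<le> 2\<close>, and linear independence
  rules out \<open>deg \<beta>0 = 0\<close>. As \<open>\<beta>0, \<beta>1, \<beta>2\<close> have no common factor, nonconstant factors of
  \<open>gcd(\<beta>0, \<beta>1)\<close> and \<open>gcd(\<beta>0, \<beta>2)\<close> are coprime and, by degree, exhaust \<open>\<beta>0\<close>; hence \<open>\<beta>0\<close>
  is coprime to every \<open>\<beta>1 + \<epsilon> \<beta>2\<close>, so the second alternative always holds.\<close>

lemma finite_tdeg_set: "finite {degree (coeff p i) + i | i. coeff p i \<noteq> 0}"
proof -
  have "{degree (coeff p i) + i | i. coeff p i \<noteq> 0} \<subseteq> (\<lambda>i. degree (coeff p i) + i) ` {..degree p}"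
    using le_degree by fastforce
  then show ?thesis
    by (rule finite_subset) simp
qed

lemma le_tdeg: "coeff p i \<noteq> 0 \<Longrightarrow> degree (coeff p i) + i \<le> tdeg p"
  unfolding tdeg_def by (rule Max_ge) (use finite_tdeg_set in auto)

lemma tdeg_le_iff: "tdeg p \<le> d \<longleftrightarrow> (\<forall>i. coeff p i \<noteq> 0 \<longrightarrow> degree (coeff p i) + i \<le> d)"
  unfolding tdeg_def using finite_tdeg_set[of p] by (subst Max_le_iff) auto

lemma tdeg_attained:
  assumes "p \<noteq> 0"
  shows "\<exists>i. coeff p i \<noteq> 0 \<and> degree (coeff p i) + i = tdeg p"
proof -
  have lc: "coeff p (degree p) \<noteq> 0"
    using assms by simp
  have "tdeg p \<in> {0} \<union> {degree (coeff p i) + i | i. coeff p i \<noteq> 0}"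
    unfolding tdeg_def by (rule Max_in) (use finite_tdeg_set in auto)
  then show ?thesis
  proof
    assume "tdeg p \<in> {0}"
    then have "tdeg p = 0"
      by simp
    with le_tdeg[OF lc] have "degree (coeff p (degree p)) + degree p = tdeg p"
      by linarith
    with lc show ?thesis
      by blast
  qed auto
qed

lemma tdeg_mult_le: "tdeg (p * q) \<le> tdeg p + tdeg q"
  unfolding tdeg_le_iff
proof (intro allI impI)
  fix n
  assume nz: "coeff (p * q) n \<noteq> 0"
  have bound: "degree (coeff p i * coeff q (n - i)) + n \<le> tdeg p + tdeg q"
    if "i \<le> n" "coeff p i * coeff q (n - i) \<noteq> 0" for i
  proof -
    from that have "coeff p i \<noteq> 0" "coeff q (n - i) \<noteq> 0"
      by auto
    with le_tdeg[of p i] le_tdeg[of q "n - i"] \<open>i \<le> n\<close> show ?thesis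
      by (simp add: degree_mult_eq)
  qed
  obtain i where "i \<le> n" "coeff p i * coeff q (n - i) \<noteq> 0"
    using nz by (metis (no_types, lifting) atMost_iff coeff_mult sum.neutral)
  with bound have "n \<le> tdeg p + tdeg q"
    by fastforce
  moreover have "degree (coeff (p * q) n) \<le> tdeg p + tdeg q - n"
    unfolding coeff_mult
  proof (rule degree_sum_le)
    fix i
    assume "i \<in> {..n}"
    then show "degree (coeff p i * coeff q (n - i)) \<le> tdeg p + tdeg q - n"
      using bound[of i] by (cases "coeff p i * coeff q (n - i) = 0") auto
  qed simp
  ultimately show "degree (coeff (p * q) n) + n \<le> tdeg p + tdeg q"
    by linarith
qed

text \<open>Among the monomials of top total degree, the one with the least \<open>y\<close>-exponent is
  leading for the lexicographic order; in a product these leading monomials multiply without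
  cancellation.\<close>

definition top_index :: "bipoly \<Rightarrow> nat" where
  "top_index p = (LEAST i. coeff p i \<noteq> 0 \<and> degree (coeff p i) + i = tdeg p)"

lemma top_index:
  assumes "p \<noteq> 0"
  shows "coeff p (top_index p) \<noteq> 0" "degree (coeff p (top_index p)) + top_index p = tdeg p"
  using LeastI_ex[OF tdeg_attained[OF assms]] unfolding top_index_def by auto

lemma less_top_index:
  assumes "i < top_index p" "coeff p i \<noteq> 0"
  shows "degree (coeff p i) + i < tdeg p"
  using le_tdeg[OF assms(2)] not_less_Least[OF assms(1)[unfolded top_index_def]] assms(2)
  by (auto simp: top_index_def)

lemma coeff_mult_top_index:
  fixes p q :: bipoly
  assumes p: "p \<noteq> 0" and q: "q \<noteq> 0"
  defines "i0 \<equiv> top_index p" and "j0 \<equiv> top_index q"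
  defines "m \<equiv> degree (coeff p i0) + degree (coeff q j0)"
  shows "coeff (coeff (p * q) (i0 + j0)) m = lead_coeff (coeff p i0) * lead_coeff (coeff q j0)"
proof -
  define n where "n = i0 + j0"
  have top: "m + n = tdeg p + tdeg q"
    using top_index(2)[OF p] top_index(2)[OF q] unfolding m_def n_def i0_def j0_def by linarith
  have vanish: "coeff (coeff p i * coeff q (n - i)) m = 0" if "i \<le> n" "i \<noteq> i0" for i
  proof (cases "coeff p i = 0 \<or> coeff q (n - i) = 0")
    case False
    then have "degree (coeff p i) + i \<le> tdeg p" "degree (coeff q (n - i)) + (n - i) \<le> tdeg q"
      by (auto intro: le_tdeg)
    moreover have "degree (coeff p i) + i < tdeg p \<or> degree (coeff q (n - i)) + (n - i) < tdeg q"
    proof (cases "i < i0")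
      case True
      then show ?thesis
        using False less_top_index unfolding i0_def by blast
    next
      case False': False
      then have "n - i < j0"
        using that n_def by linarith
      then show ?thesis
        using False less_top_index unfolding j0_def by blast
    qed
    ultimately have "degree (coeff p i * coeff q (n - i)) < m"
      using degree_mult_le[of "coeff p i" "coeff q (n - i)"] top \<open>i \<le> n\<close> by linarith
    then show ?thesis
      by (simp add: coeff_eq_0)
  qed auto
  have "coeff (coeff (p * q) n) m = (\<Sum>i\<le>n. coeff (coeff p i * coeff q (n - i)) m)"
    by (simp add: coeff_mult coeff_sum)
  also have "\<dots> = coeff (coeff p i0 * coeff q j0) m"
    by (subst sum.remove[of _ i0]) (use vanish in \<open>auto simp: n_def\<close>)
  also have "\<dots> = lead_coeff (coeff p i0) * lead_coeff (coeff q j0)"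
    unfolding m_def by (simp add: coeff_mult_degree_sum)
  finally show ?thesis
    unfolding n_def .
qed

lemma tdeg_mult:
  fixes p q :: bipoly
  assumes "p \<noteq> 0" "q \<noteq> 0"
  shows "tdeg (p * q) = tdeg p + tdeg q"
proof (rule antisym[OF tdeg_mult_le])
  define i0 j0 where "i0 = top_index p" and "j0 = top_index q"
  have nz: "coeff p i0 \<noteq> 0" "coeff q j0 \<noteq> 0"
    using top_index(1) assms unfolding i0_def j0_def by auto
  then have "coeff (coeff (p * q) (i0 + j0)) (degree (coeff p i0) + degree (coeff q j0)) \<noteq> 0"
    using coeff_mult_top_index[OF assms] unfolding i0_def j0_def by simp
  then have "coeff (p * q) (i0 + j0) \<noteq> 0"
    and "degree (coeff p i0) + degree (coeff q j0) \<le> degree (coeff (p * q) (i0 + j0))"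
    by (auto intro: le_degree)
  with le_tdeg[of "p * q" "i0 + j0"]
  have "degree (coeff p i0) + degree (coeff q j0) + (i0 + j0) \<le> tdeg (p * q)"
    by linarith
  moreover have "degree (coeff p i0) + i0 = tdeg p" "degree (coeff q j0) + j0 = tdeg q"
    using top_index(2) assms unfolding i0_def j0_def by simp_all
  ultimately show "tdeg p + tdeg q \<le> tdeg (p * q)"
    by linarith
qed

lemma tdeg_1 [simp]: "tdeg 1 = 0"
  by (simp add: tdeg_le_iff coeff_1 one_pCons[symmetric] flip: le_zero_eq)

lemma tdeg_prod:
  fixes f :: "'a \<Rightarrow> bipoly"
  assumes "\<And>t. t \<in> T \<Longrightarrow> f t \<noteq> 0"
  shows "tdeg (\<Prod>t\<in>T. f t) = (\<Sum>t\<in>T. tdeg (f t))"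
  using assms by (induction T rule: infinite_finite_induct) (simp_all add: tdeg_mult)

lemma dvd_imp_tdeg_le:
  fixes p q :: bipoly
  assumes "p dvd q" "q \<noteq> 0"
  shows "tdeg p \<le> tdeg q"
  using assms tdeg_mult by (auto elim!: dvdE)

lemma tdeg_div:
  fixes g p :: bipoly
  assumes "g dvd p" "p \<noteq> 0"
  shows "tdeg p = tdeg g + tdeg (p div g)"
proof -
  have "g \<noteq> 0" "p div g \<noteq> 0"
    using assms by (auto simp: dvd_div_eq_0_iff)
  then have "tdeg (g * (p div g)) = tdeg g + tdeg (p div g)"
    by (rule tdeg_mult)
  with assms(1) show ?thesis
    by simp
qed

lemma bconst_1: "bconst 1 = 1"
  by (simp add: bconst_def one_pCons)

lemma is_unit_bconst: "c \<noteq> 0 \<Longrightarrow> is_unit (bconst c)"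
  by (rule dvdI[of _ _ "bconst (1 / c)"]) (simp add: bconst_def one_pCons)

lemma is_unit_iff_bconst: "is_unit p \<longleftrightarrow> (\<exists>c. c \<noteq> 0 \<and> p = bconst c)"
  by (auto simp: is_unit_poly_iff is_unit_const_poly_iff dvd_field_iff bconst_def)

lemma tdeg_eq_0_imp_unit:
  fixes p :: bipoly
  assumes "p \<noteq> 0" "tdeg p = 0"
  shows "is_unit p"
proof -
  have "coeff p i = 0" if "i > 0" for i
    using le_tdeg[of p i] assms(2) that by fastforce
  then have "degree p = 0"
    using degree_le[of 0 p] by auto
  then have "[:coeff p 0:] = p"
    by (rule degree_0_id)
  moreover have "coeff p 0 \<noteq> 0"
    using assms(1) calculation by force
  moreover have "[:coeff (coeff p 0) 0:] = coeff p 0"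
    using le_tdeg[OF calculation(2)] assms(2) by (intro degree_0_id) simp
  ultimately show ?thesis
    unfolding is_unit_iff_bconst bconst_def by (metis pCons_eq_0_iff)
qed

lemma dvd_tdeg_le_imp_dvd:
  fixes p q :: bipoly
  assumes "p dvd q" "q \<noteq> 0" "tdeg q \<le> tdeg p"
  shows "q dvd p"
proof -
  obtain c where q: "q = p * c"
    using assms(1) by blast
  with assms(2,3) have "is_unit c"
    by (intro tdeg_eq_0_imp_unit) (auto simp: tdeg_mult)
  with q show ?thesis
    by simp
qed

lemma associated_imp_bconst_mult:
  fixes p q :: bipoly
  assumes "normalize p = normalize q"
  shows "\<exists>c. c \<noteq> 0 \<and> p = bconst c * q"
proof (cases "q = 0")
  case True
  with assms show ?thesis
    by (intro exI[of _ 1]) simp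
next
  case False
  obtain y where y: "p = q * y"
    using associatedD2[OF assms] by blast
  obtain x where "q = p * x"
    using associatedD1[OF assms] by blast
  with y have "q * (y * x) = q * 1"
    by (metis mult.assoc mult.right_neutral)
  with False have "is_unit y"
    by (metis dvdI mult_left_cancel)
  with y show ?thesis
    by (auto simp: is_unit_iff_bconst ac_simps)
qed

lemma lin_indep3_not_associated:
  assumes "lin_indep3 p q r"
  shows "normalize p \<noteq> normalize q"
proof
  assume "normalize p = normalize q"
  then obtain c where "p = bconst c * q"
    using associated_imp_bconst_mult by blast
  then have "bconst 1 * p + bconst (- c) * q + bconst 0 * r = 0"
    by (simp add: bconst_def flip: smult_add_left)
  with assms show False
    unfolding lin_indep3_def by (metis one_neq_zero)
qed

lemma lin_indep3_common_divisor_tdeg_less: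
  assumes "lin_indep3 p q r" "g dvd p" "g dvd q" "p \<noteq> 0" "q \<noteq> 0" "tdeg p = tdeg q"
  shows "tdeg g < tdeg p"
proof (rule ccontr)
  assume "\<not> tdeg g < tdeg p"
  then have "p dvd g" "q dvd g"
    using assms by (auto intro!: dvd_tdeg_le_imp_dvd)
  with assms(2,3) have "normalize p = normalize q"
    by (meson associatedI dvd_trans)
  with lin_indep3_not_associated[OF assms(1)] show False ..
qed

lemma common_factor_unique:
  fixes a b g g' :: bipoly
  assumes "a = g * x" "b = g * y" "coprime x y"
    and "a = g' * x'" "b = g' * y'" "coprime x' y'"
  shows "\<exists>c. c \<noteq> 0 \<and> g' = bconst c * g"
proof -
  have "gcd a b = normalize g"
    using assms(1-3) by (simp add: gcd_mult_left)
  moreover have "gcd a b = normalize g'"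
    using assms(4-6) by (simp add: gcd_mult_left)
  ultimately show ?thesis
    by (intro associated_imp_bconst_mult) simp
qed

lemma coprime_cross_mult_imp_dvd:
  fixes b b' s \<sigma> :: "'a :: semiring_gcd"
  assumes "coprime b b'" "s * b = \<sigma> * b'" "b \<noteq> 0"
  shows "\<sigma> dvd b * gcd \<sigma> s"
proof -
  have "b dvd \<sigma>"
    using assms(1,2) by (metis coprime_dvd_mult_left_iff dvd_triv_right)
  then obtain h where h: "\<sigma> = b * h" ..
  with assms(2) have "b * s = b * (h * b')"
    by (simp add: ac_simps)
  with assms(3) have "s = h * b'"
    by simp
  with h show ?thesis
    by (simp add: mult_dvd_mono)
qed

lemma tdeg_le_gcd_cross_mult:
  fixes b b' s \<sigma> :: bipoly
  assumes "coprime b b'" "s * b = \<sigma> * b'" "\<sigma> \<noteq> 0"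
  shows "tdeg \<sigma> \<le> tdeg (gcd \<sigma> s) + tdeg b"
proof -
  have "b \<noteq> 0"
    using assms by auto
  with assms have "\<sigma> dvd b * gcd \<sigma> s"
    by (intro coprime_cross_mult_imp_dvd)
  then have "tdeg \<sigma> \<le> tdeg (b * gcd \<sigma> s)"
    by (rule dvd_imp_tdeg_le) (use \<open>b \<noteq> 0\<close> assms(3) in simp)
  also have "\<dots> = tdeg b + tdeg (gcd \<sigma> s)"
    by (rule tdeg_mult) (use \<open>b \<noteq> 0\<close> assms(3) in simp_all)
  finally show ?thesis
    by simp
qed

lemma gcd3_dvd:
  fixes a b c :: "'a :: semiring_gcd"
  shows "gcd a (gcd b c) dvd a" "gcd a (gcd b c) dvd b" "gcd a (gcd b c) dvd c"
  by (rule gcd_dvd1, rule dvd_trans[OF gcd_dvd2 gcd_dvd1], rule dvd_trans[OF gcd_dvd2 gcd_dvd2])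

lemma gcd3_dvd_gcd_pencil:
  fixes \<sigma> s1 s2 t :: "'a :: semiring_gcd"
  shows "gcd \<sigma> (gcd s1 s2) dvd gcd \<sigma> (s1 + t * s2)"
  by (meson dvd_add dvd_mult gcd_dvd1 gcd_dvd2 gcd_greatest dvd_trans)

lemma gcd_gcd_pencil:
  fixes \<sigma> s1 s2 t u :: "'a :: ring_gcd"
  assumes "is_unit (t - u)"
  shows "gcd (gcd \<sigma> (s1 + t * s2)) (gcd \<sigma> (s1 + u * s2)) = gcd \<sigma> (gcd s1 s2)"
proof (rule associated_eqI)
  let ?d = "gcd (gcd \<sigma> (s1 + t * s2)) (gcd \<sigma> (s1 + u * s2))"
  have d_t: "?d dvd s1 + t * s2" and d_u: "?d dvd s1 + u * s2" and d_\<sigma>: "?d dvd \<sigma>"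
    by (meson gcd_dvd1 gcd_dvd2 dvd_trans)+
  have "?d dvd (s1 + t * s2) - (s1 + u * s2)"
    using d_t d_u by (rule dvd_diff)
  also have "(s1 + t * s2) - (s1 + u * s2) = (t - u) * s2"
    by (simp add: algebra_simps)
  finally have "?d dvd s2"
    using assms by (simp add: dvd_mult_unit_iff')
  then have "?d dvd (s1 + t * s2) - t * s2"
    using d_t dvd_mult by (blast intro: dvd_diff)
  then have "?d dvd s1"
    by simp
  with d_\<sigma> \<open>?d dvd s2\<close> show "?d dvd gcd \<sigma> (gcd s1 s2)"
    by simp
  show "gcd \<sigma> (gcd s1 s2) dvd ?d"
    using gcd3_dvd_gcd_pencil[of \<sigma> s1 s2 t] gcd3_dvd_gcd_pencil[of \<sigma> s1 s2 u] by (rule gcd_greatest)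
qed simp_all

lemma prod_dvd_if_pairwise_coprime:
  fixes f :: "'b \<Rightarrow> 'a :: semiring_gcd"
  assumes "finite T" "\<And>t. t \<in> T \<Longrightarrow> f t dvd a"
    and "\<And>t u. t \<in> T \<Longrightarrow> u \<in> T \<Longrightarrow> t \<noteq> u \<Longrightarrow> coprime (f t) (f u)"
  shows "(\<Prod>t\<in>T. f t) dvd a"
  using assms
proof (induction T rule: finite_induct)
  case (insert t T)
  have "coprime (f t) (\<Prod>u\<in>T. f u)"
    by (rule prod_coprime_right) (use insert in blast)
  with insert show ?case
    by (simp add: divides_mult)
qed simp

lemma sum_tdeg_gcd_pencil_le:
  fixes \<sigma> s1 s2 :: bipoly
  assumes "\<sigma> \<noteq> 0" "finite T"
  defines "G \<equiv> gcd \<sigma> (gcd s1 s2)"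
  shows "(\<Sum>t\<in>T. tdeg (gcd \<sigma> (s1 + bconst t * s2) div G)) \<le> tdeg (\<sigma> div G)"
proof -
  define a where "a t = gcd \<sigma> (s1 + bconst t * s2) div G" for t
  have G_dvd: "G dvd gcd \<sigma> (s1 + bconst t * s2)" for t
    unfolding G_def by (rule gcd3_dvd_gcd_pencil)
  have a_dvd: "a t dvd \<sigma> div G" for t
    unfolding a_def using G_dvd by (simp add: div_dvd_div G_def)
  have "coprime (a t) (a u)" if "t \<noteq> u" for t u
  proof -
    have "is_unit (bconst t - bconst u)"
      using that is_unit_bconst[of "t - u"] by (simp add: bconst_def)
    then have "G = gcd (gcd \<sigma> (s1 + bconst t * s2)) (gcd \<sigma> (s1 + bconst u * s2))"
      unfolding G_def by (rule gcd_gcd_pencil[symmetric])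
    with assms(1) show ?thesis
      unfolding a_def by (simp add: div_gcd_coprime)
  qed
  with assms a_dvd have "(\<Prod>t\<in>T. a t) dvd \<sigma> div G"
    by (intro prod_dvd_if_pairwise_coprime)
  moreover have "\<sigma> div G \<noteq> 0" and a_nz: "\<And>t. a t \<noteq> 0"
    using assms(1) G_dvd by (auto simp: a_def G_def dvd_div_eq_0_iff)
  ultimately have "tdeg (\<Prod>t\<in>T. a t) \<le> tdeg (\<sigma> div G)"
    by (intro dvd_imp_tdeg_le)
  moreover have "tdeg (\<Prod>t\<in>T. a t) = (\<Sum>t\<in>T. tdeg (a t))"
    by (intro tdeg_prod a_nz)
  ultimately show ?thesis
    unfolding a_def by simp
qed

lemma tdeg_le_gcd_pencil:
  fixes \<sigma> s1 s2 :: bipoly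
  assumes "\<sigma> \<noteq> 0" and pencil: "\<And>t. tdeg \<sigma> \<le> tdeg (gcd \<sigma> (s1 + bconst t * s2)) + m"
  shows "tdeg \<sigma> \<le> tdeg (gcd \<sigma> (gcd s1 s2)) + m"
proof -
  define G where "G = gcd \<sigma> (gcd s1 s2)"
  define d where "d t = tdeg (gcd \<sigma> (s1 + bconst t * s2) div G)" for t
  define h where "h = tdeg (\<sigma> div G)"
  define T where "T = real ` {..m + 1}"
  have "h \<le> d t + m" for t
  proof -
    have "G dvd gcd \<sigma> (s1 + bconst t * s2)"
      unfolding G_def by (rule gcd3_dvd_gcd_pencil)
    then have "tdeg (gcd \<sigma> (s1 + bconst t * s2)) = tdeg G + d t"
      unfolding d_def using assms(1) by (intro tdeg_div) simp_all
    moreover have "tdeg \<sigma> = tdeg G + h"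
      unfolding h_def using assms(1) by (intro tdeg_div) (simp_all add: G_def)
    ultimately show ?thesis
      using pencil[of t] by linarith
  qed
  then have "(\<Sum>t\<in>T. h) \<le> (\<Sum>t\<in>T. d t + m)"
    by (rule sum_mono)
  then have "card T * h \<le> (\<Sum>t\<in>T. d t) + card T * m"
    by (simp add: sum.distrib)
  moreover have "card T = m + 2"
    unfolding T_def by (simp add: card_image inj_on_def)
  moreover have "(\<Sum>t\<in>T. d t) \<le> h"
    unfolding d_def h_def G_def T_def by (rule sum_tdeg_gcd_pencil_le[OF assms(1)]) simp
  ultimately have "(m + 1) * h \<le> (m + 1) * m + m"
    by (simp add: algebra_simps)
  have "h \<le> m"
  proof (rule ccontr)
    assume "\<not> h \<le> m"
    then have "(m + 1) * (m + 1) \<le> (m + 1) * h"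
      by (intro mult_le_mono2) simp
    with \<open>(m + 1) * h \<le> (m + 1) * m + m\<close> show False
      by (simp add: algebra_simps)
  qed
  with tdeg_div[of G \<sigma>] assms(1) show ?thesis
    unfolding h_def G_def by simp
qed

lemma tdeg_le_gcd_pencil_if_cross_mult:
  fixes \<sigma> s1 s2 :: bipoly
  assumes "\<sigma> \<noteq> 0"
    and "\<And>t. \<exists>\<beta> \<beta>'. \<beta> \<in> Pi m \<and> coprime \<beta> \<beta>' \<and> (s1 + bconst t * s2) * \<beta> = \<sigma> * \<beta>'"
  shows "tdeg \<sigma> \<le> tdeg (gcd \<sigma> (gcd s1 s2)) + m"
proof (rule tdeg_le_gcd_pencil[OF assms(1)])
  fix t
  from assms(2) obtain \<beta> \<beta>' where "\<beta> \<in> Pi m" "coprime \<beta> \<beta>'" "(s1 + bconst t * s2) * \<beta> = \<sigma> * \<beta>'"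
    by blast
  with tdeg_le_gcd_cross_mult[of \<beta> \<beta>'] assms(1)
  show "tdeg \<sigma> \<le> tdeg (gcd \<sigma> (s1 + bconst t * s2)) + m"
    by (fastforce simp: Pi_def)
qed

lemma is_unit_common_divisor_div_gcd3:
  fixes a b c d :: "'a :: semiring_gcd"
  defines "g \<equiv> gcd a (gcd b c)"
  assumes "g \<noteq> 0" "d dvd a div g" "d dvd b div g" "d dvd c div g"
  shows "is_unit d"
proof -
  from assms(3-5) gcd3_dvd[of a b c, folded g_def] have "g * d dvd a" "g * d dvd b" "g * d dvd c"
    by (metis dvd_mult_div_cancel mult_dvd_mono dvd_refl)+
  then have "g * d dvd g * 1"
    unfolding g_def by simp
  with dvd_times_left_cancel_iff[OF assms(2)] show ?thesis
    by blast
qed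

lemma coprime_add_unit_mult:
  fixes a b c r r' e :: "'a :: ring_gcd"
  assumes "a dvd r * r'" "r dvd b" "r' dvd c" "is_unit e"
    and no_common: "\<And>d. d dvd a \<Longrightarrow> d dvd b \<Longrightarrow> d dvd c \<Longrightarrow> is_unit d"
  shows "coprime a (b + e * c)"
proof (rule coprimeI)
  fix d
  assume d: "d dvd a" "d dvd b + e * c"
  have "coprime d r"
  proof (rule coprimeI)
    fix f
    assume f: "f dvd d" "f dvd r"
    have f_b: "f dvd b"
      using f(2) assms(2) by (rule dvd_trans)
    have "f dvd (b + e * c) - b"
      using dvd_trans[OF f(1) d(2)] f_b by (rule dvd_diff)
    then have "f dvd e * c"
      by simp
    with assms(4) have "f dvd c"
      by (simp only: dvd_mult_unit_iff')
    with dvd_trans[OF f(1) d(1)] f_b show "is_unit f"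
      by (rule no_common)
  qed
  moreover have "coprime d r'"
  proof (rule coprimeI)
    fix f
    assume f: "f dvd d" "f dvd r'"
    have f_c: "f dvd c"
      using f(2) assms(3) by (rule dvd_trans)
    have "f dvd (b + e * c) - e * c"
      using dvd_trans[OF f(1) d(2)] dvd_mult[OF f_c] by (rule dvd_diff)
    then have "f dvd b"
      by simp
    with dvd_trans[OF f(1) d(1)] show "is_unit f"
      using f_c by (rule no_common)
  qed
  ultimately have "coprime d (r * r')"
    by simp
  moreover have "d dvd r * r'"
    using d(1) assms(1) by (rule dvd_trans)
  ultimately show "is_unit d"
    by (rule coprime_common_divisor[OF _ dvd_refl])
qed

lemma coprime_add_unit_mult_if_tdeg_le_2:
  fixes \<beta>0 \<beta>1 \<beta>2 r r' e :: bipoly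
  assumes "\<beta>0 \<noteq> 0" "tdeg \<beta>0 \<le> 2" "is_unit e"
    and no_common: "\<And>d. d dvd \<beta>0 \<Longrightarrow> d dvd \<beta>1 \<Longrightarrow> d dvd \<beta>2 \<Longrightarrow> is_unit d"
    and r: "tdeg r \<ge> 1" "r dvd \<beta>0" "r dvd \<beta>1"
    and r': "tdeg r' \<ge> 1" "r' dvd \<beta>0" "r' dvd \<beta>2"
  shows "coprime \<beta>0 (\<beta>1 + e * \<beta>2)"
proof (rule coprime_add_unit_mult[OF _ r(3) r'(3) assms(3) no_common])
  have "coprime r r'"
  proof (rule coprimeI)
    fix d
    assume "d dvd r" "d dvd r'"
    with r r' show "is_unit d"
      by (meson dvd_trans no_common)
  qed
  with r r' have "r * r' dvd \<beta>0"
    by (simp add: divides_mult)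
  moreover have "tdeg \<beta>0 \<le> tdeg (r * r')"
    using r r' assms(1,2) by (subst tdeg_mult) auto
  ultimately show "\<beta>0 dvd r * r'"
    by (rule dvd_tdeg_le_imp_dvd[OF _ assms(1)])
qed

theorem mainTheorem6:
  fixes \<sigma>0 s1 s2 :: bipoly and k :: nat
  assumes indep: "lin_indep3 \<sigma>0 s1 s2"
    and deg: "\<sigma>0 \<noteq> 0" "s1 \<noteq> 0" "s2 \<noteq> 0" "tdeg \<sigma>0 = k" "tdeg s1 = k" "tdeg s2 = k"
    and sqf: "\<not> has_multiple_factor \<sigma>0" "\<not> has_multiple_factor s1" "\<not> has_multiple_factor s2"
    and comb: "\<And>a b. (a, b) \<noteq> (0, 0) \<Longrightarrow>
        \<exists>\<beta> \<beta>'. \<beta> \<in> Pi 2 \<and> \<beta>' \<in> Pi 2 \<and> coprime \<beta> \<beta>' \<and>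
              (bconst a * s1 + bconst b * s2) * \<beta> = \<sigma>0 * \<beta>'"
  shows "\<exists>\<sigma>t \<beta>0 \<beta>1 \<beta>2.
      \<sigma>t \<in> Pi (k - 1) \<and> \<beta>0 \<in> Pi 2 \<and> \<beta>1 \<in> Pi 2 \<and> \<beta>2 \<in> Pi 2 \<and>
      \<sigma>0 = \<sigma>t * \<beta>0 \<and> s1 = \<sigma>t * \<beta>1 \<and> s2 = \<sigma>t * \<beta>2 \<and>
      (coprime \<beta>0 \<beta>1 \<longrightarrow>
         (\<forall>\<sigma>' \<gamma>0 \<gamma>1. \<sigma>0 = \<sigma>' * \<gamma>0 \<and> s1 = \<sigma>' * \<gamma>1 \<and> coprime \<gamma>0 \<gamma>1 \<longrightarrow>
            (\<exists>c. c \<noteq> 0 \<and> \<sigma>' = bconst c * \<sigma>t))) \<and>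
      ((\<exists>r. tdeg r \<ge> 1 \<and> r dvd \<beta>0 \<and> r dvd \<beta>1) \<and>
       (\<exists>r. tdeg r \<ge> 1 \<and> r dvd \<beta>0 \<and> r dvd \<beta>2) \<longrightarrow>
         (\<exists>l l0 l1 l2. tdeg l = 1 \<and> tdeg l0 = 1 \<and> tdeg l1 = 1 \<and> tdeg l2 = 1 \<and>
              \<beta>0 = l * l0 \<and> \<beta>1 = l * l1 \<and> \<beta>2 = l * l2)
         \<or> (\<forall>\<epsilon>::real. \<epsilon> > 0 \<longrightarrow> coprime \<beta>0 (\<beta>1 + bconst \<epsilon> * \<beta>2)))"
proof -
  define G where "G = gcd \<sigma>0 (gcd s1 s2)"
  define \<beta>0 \<beta>1 \<beta>2 where "\<beta>0 = \<sigma>0 div G" and "\<beta>1 = s1 div G" and "\<beta>2 = s2 div G"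
  note G_dvd = gcd3_dvd[of \<sigma>0 s1 s2, folded G_def]
  then have factors: "\<sigma>0 = G * \<beta>0" "s1 = G * \<beta>1" "s2 = G * \<beta>2"
    unfolding \<beta>0_def \<beta>1_def \<beta>2_def by simp_all
  then have nz: "G \<noteq> 0" "\<beta>0 \<noteq> 0" "\<beta>1 \<noteq> 0" "\<beta>2 \<noteq> 0"
    using deg(1-3) by auto
  have tdeg_\<beta>: "tdeg \<beta>0 = k - tdeg G" "tdeg \<beta>1 = k - tdeg G" "tdeg \<beta>2 = k - tdeg G"
    using deg(4-6) factors nz by (simp_all add: tdeg_mult)
  have "\<exists>\<beta> \<beta>'. \<beta> \<in> Pi 2 \<and> coprime \<beta> \<beta>' \<and> (s1 + bconst t * s2) * \<beta> = \<sigma>0 * \<beta>'" for t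
    using comb[of 1 t] by (auto simp: bconst_1)
  then have "tdeg \<sigma>0 \<le> tdeg G + 2"
    unfolding G_def by (rule tdeg_le_gcd_pencil_if_cross_mult[OF deg(1)])
  moreover have "tdeg G < k"
    using lin_indep3_common_divisor_tdeg_less[OF indep G_dvd(1,2)] deg by simp
  ultimately have degrees: "tdeg G \<le> k - 1" "tdeg \<beta>0 \<le> 2"
    using deg(4) tdeg_\<beta>(1) by linarith+
  have no_common: "is_unit d" if "d dvd \<beta>0" "d dvd \<beta>1" "d dvd \<beta>2" for d
    using nz(1) that unfolding G_def \<beta>0_def \<beta>1_def \<beta>2_def by (rule is_unit_common_divisor_div_gcd3)
  have pencil_coprime: "coprime \<beta>0 (\<beta>1 + bconst \<epsilon> * \<beta>2)"
    if "\<epsilon> > 0" "\<exists>r. tdeg r \<ge> 1 \<and> r dvd \<beta>0 \<and> r dvd \<beta>1"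
      "\<exists>r. tdeg r \<ge> 1 \<and> r dvd \<beta>0 \<and> r dvd \<beta>2" for \<epsilon>
    using that coprime_add_unit_mult_if_tdeg_le_2[OF nz(2) degrees(2) is_unit_bconst no_common]
    by fastforce
  have unique: "\<exists>c. c \<noteq> 0 \<and> \<sigma>' = bconst c * G"
    if "coprime \<beta>0 \<beta>1" "\<sigma>0 = \<sigma>' * \<gamma>0 \<and> s1 = \<sigma>' * \<gamma>1 \<and> coprime \<gamma>0 \<gamma>1" for \<sigma>' \<gamma>0 \<gamma>1
    using common_factor_unique[OF factors(1,2)] that by blast
  have "G \<in> Pi (k - 1)" "\<beta>0 \<in> Pi 2" "\<beta>1 \<in> Pi 2" "\<beta>2 \<in> Pi 2"
    using tdeg_\<beta> degrees by (simp_all add: Pi_def)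
  with factors unique pencil_coprime show ?thesis
    by (intro exI[of _ G] exI[of _ \<beta>0] exI[of _ \<beta>1] exI[of _ \<beta>2]) blast
qed

end
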